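(* Let $A$ and $B$ be groups admitting regular left-orders. Then the free product $A*B$ admits a one-counter left-order.
   Context: A left-order on a group $G$ is a total order invariant under left multiplication, with positive cone $\{g:1\prec g\}$. It is regular (resp. one-counter) if $G$ is finitely generated and there exist a finite set $X$, a surjective monoid homomorphism $\pi\colon X^*\to G$ and a language $\mathcal{L}\subseteq X^*$ accepted by a finite state automaton (resp. by a nondeterministic pushdown automaton with a single stack symbol) with $\pi(\mathcal{L})$ equal to the positive cone. *)

theory Defs
  imports "HOL-Algebra.Group"
begin

definition left_order :: "('g, 'm) monoid_scheme \<Rightarrow> ('g \<times> 'g) set \<Rightarrow> bool" where
  "left_order G R \<longleftrightarrow>
     R \<subseteq> carrier G \<times> carrier G \<and>
     (\<forall>x\<in>carrier G. (x, x) \<notin> R) \<and>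
     (\<forall>x\<in>carrier G. \<forall>y\<in>carrier G. \<forall>z\<in>carrier G. (x, y) \<in> R \<longrightarrow> (y, z) \<in> R \<longrightarrow> (x, z) \<in> R) \<and>
     (\<forall>x\<in>carrier G. \<forall>y\<in>carrier G. x \<noteq> y \<longrightarrow> (x, y) \<in> R \<or> (y, x) \<in> R) \<and>
     (\<forall>g\<in>carrier G. \<forall>x\<in>carrier G. \<forall>y\<in>carrier G. (x, y) \<in> R \<longrightarrow> (g \<otimes>\<^bsub>G\<^esub> x, g \<otimes>\<^bsub>G\<^esub> y) \<in> R)"

definition positive_cone :: "('g, 'm) monoid_scheme \<Rightarrow> ('g \<times> 'g) set \<Rightarrow> 'g set" where
  "positive_cone G R = {g \<in> carrier G. (\<one>\<^bsub>G\<^esub>, g) \<in> R}"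

text \<open>Finite alphabets are encoded as finite sets of natural numbers. A monoid homomorphism
  from the free monoid X* to G is determined by the images f x of the letters.\<close>
definition eval_word :: "('g, 'm) monoid_scheme \<Rightarrow> (nat \<Rightarrow> 'g) \<Rightarrow> nat list \<Rightarrow> 'g" where
  "eval_word G f w = foldr (\<lambda>x g. f x \<otimes>\<^bsub>G\<^esub> g) w \<one>\<^bsub>G\<^esub>"

section \<open>Finite state automata (deterministic; equivalent to nondeterministic)\<close>

definition dfa_lang :: "nat set \<Rightarrow> nat set \<Rightarrow> nat \<Rightarrow> nat set \<Rightarrow> (nat \<Rightarrow> nat \<Rightarrow> nat) \<Rightarrow> nat list set" where
  "dfa_lang X Q q0 F d = {w \<in> lists X. fold (\<lambda>x q. d q x) w q0 \<in> F}"

definition regular_lang :: "nat set \<Rightarrow> nat list set \<Rightarrow> bool" where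
  "regular_lang X L \<longleftrightarrow>
     (\<exists>Q q0 F d. finite Q \<and> q0 \<in> Q \<and> F \<subseteq> Q \<and> (\<forall>q\<in>Q. \<forall>x\<in>X. d q x \<in> Q) \<and>
        L = dfa_lang X Q q0 F d)"

text \<open>A nondeterministic pushdown automaton with a single stack symbol (above a bottom marker),
  i.e. a one-counter automaton. The stack content is a counter c. A transition
  (p, a, z, q, n) reads the letter a (or nothing if a = None), is enabled in state p iff
  (c = 0) = z (i.e. the top of stack is the bottom marker iff z), goes to state q, pops the
  top symbol (unless it is the bottom marker) and pushes n copies of the stack symbol.\<close>
type_synonym oca_trans = "nat \<times> nat option \<times> bool \<times> nat \<times> nat"

inductive oca_run :: "oca_trans set \<Rightarrow> nat \<Rightarrow> nat list \<Rightarrow> nat \<Rightarrow> nat \<Rightarrow> nat \<Rightarrow> bool"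
  for T :: "oca_trans set" where
  oca_refl: "oca_run T p [] c p c"
| oca_step: "(p, a, c = 0, q, n) \<in> T \<Longrightarrow>
     oca_run T q w (if c = 0 then n else c - 1 + n) r e \<Longrightarrow>
     oca_run T p (case a of None \<Rightarrow> w | Some x \<Rightarrow> x # w) c r e"

definition oca_lang :: "nat \<Rightarrow> nat set \<Rightarrow> oca_trans set \<Rightarrow> nat list set" where
  "oca_lang q0 F T = {w. \<exists>q e. oca_run T q0 w 0 q e \<and> q \<in> F}"

definition one_counter_lang :: "nat set \<Rightarrow> nat list set \<Rightarrow> bool" where
  "one_counter_lang X L \<longleftrightarrow>
     (\<exists>Q q0 F T. finite Q \<and> q0 \<in> Q \<and> F \<subseteq> Q \<and> finite T \<and>
        (\<forall>(p, a, z, q, n)\<in>T. p \<in> Q \<and> q \<in> Q \<and> set_option a \<subseteq> X) \<and>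
        L = oca_lang q0 F T)"

definition regular_left_order :: "('g, 'm) monoid_scheme \<Rightarrow> ('g \<times> 'g) set \<Rightarrow> bool" where
  "regular_left_order G R \<longleftrightarrow> left_order G R \<and>
     (\<exists>X f L. finite X \<and> f ` X \<subseteq> carrier G \<and> eval_word G f ` lists X = carrier G \<and>
        L \<subseteq> lists X \<and> regular_lang X L \<and> eval_word G f ` L = positive_cone G R)"

definition one_counter_left_order :: "('g, 'm) monoid_scheme \<Rightarrow> ('g \<times> 'g) set \<Rightarrow> bool" where
  "one_counter_left_order G R \<longleftrightarrow> left_order G R \<and>
     (\<exists>X f L. finite X \<and> f ` X \<subseteq> carrier G \<and> eval_word G f ` lists X = carrier G \<and>
        L \<subseteq> lists X \<and> one_counter_lang X L \<and> eval_word G f ` L = positive_cone G R)"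

fun fp_reduced :: "('a, 'm) monoid_scheme \<Rightarrow> ('b, 'n) monoid_scheme \<Rightarrow> ('a + 'b) list \<Rightarrow> bool" where
  "fp_reduced A B [] = True"
| "fp_reduced A B (Inl a # w) \<longleftrightarrow> a \<in> carrier A \<and> a \<noteq> \<one>\<^bsub>A\<^esub> \<and> fp_reduced A B w \<and>
      (case w of Inl _ # _ \<Rightarrow> False | _ \<Rightarrow> True)"
| "fp_reduced A B (Inr b # w) \<longleftrightarrow> b \<in> carrier B \<and> b \<noteq> \<one>\<^bsub>B\<^esub> \<and> fp_reduced A B w \<and>
      (case w of Inr _ # _ \<Rightarrow> False | _ \<Rightarrow> True)"

fun fp_cons :: "('a, 'm) monoid_scheme \<Rightarrow> ('b, 'n) monoid_scheme \<Rightarrow> 'a + 'b \<Rightarrow> ('a + 'b) list \<Rightarrow> ('a + 'b) list" where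
  "fp_cons A B (Inl a) (Inl a' # w) =
     (if a \<otimes>\<^bsub>A\<^esub> a' = \<one>\<^bsub>A\<^esub> then w else Inl (a \<otimes>\<^bsub>A\<^esub> a') # w)"
| "fp_cons A B (Inr b) (Inr b' # w) =
     (if b \<otimes>\<^bsub>B\<^esub> b' = \<one>\<^bsub>B\<^esub> then w else Inr (b \<otimes>\<^bsub>B\<^esub> b') # w)"
| "fp_cons A B (Inl a) w = (if a = \<one>\<^bsub>A\<^esub> then w else Inl a # w)"
| "fp_cons A B (Inr b) w = (if b = \<one>\<^bsub>B\<^esub> then w else Inr b # w)"

definition free_product :: "('a, 'm) monoid_scheme \<Rightarrow> ('b, 'n) monoid_scheme \<Rightarrow> ('a + 'b) list monoid" where
  "free_product A B =
     \<lparr>carrier = {w. fp_reduced A B w},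
      mult = (\<lambda>x y. foldr (fp_cons A B) x y),
      one = []\<rparr>"

end

theory Submission
  imports Defs "HOL-Library.Countable"
begin

text \<open>
  Let \<open>P\<^sub>A\<close>, \<open>P\<^sub>B\<close> be the positive cones of the given orders. For a reduced word
  \<open>g = s\<^sub>1 \<dots> s\<^sub>n\<close> of \<open>A * B\<close> let \<open>\<phi>(g)\<close> be the sum of the signs \<open>\<plusminus>1\<close> of the syllables
  \<open>s\<^sub>i\<close> with respect to \<open>P\<^sub>A\<close> or \<open>P\<^sub>B\<close>, plus \<open>1\<close> for every passage from \<open>A\<close> to \<open>B\<close> and \<open>-1\<close>
  for every passage from \<open>B\<close> to \<open>A\<close>. Then \<open>\<phi>(g)\<close> is odd for \<open>g \<noteq> 1\<close>, \<open>\<phi>(g\<inverse>) = -\<phi>(g)\<close>, and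
  \<open>\<phi>(gh) \<ge> \<phi>(g) + \<phi>(h) - 1\<close>: in the product the cancelled part of \<open>g\<close> contributes exactly the
  negative of the cancelled part of \<open>h\<close>, and a merged syllable \<open>st\<close> has sign at least
  \<open>sign s + sign t - 1\<close>. Hence \<open>x < y \<longleftrightarrow> \<phi>(x\<inverse>y) > 0\<close> is a left-order with positive cone
  \<open>{g. \<phi>(g) > 0}\<close>.

  Spelling a positive syllable by a word of the regular language of its cone, and a negative one
  by the reversed, letterwise inverted spelling of its inverse, a finite automaton can guess the
  syllables of \<open>g\<close>, check them and add up \<open>\<phi>(g)\<close> on the way; keeping the sign of the running
  sum in the finite control and its absolute value on the counter yields a one-counter automaton.
\<close>

section \<open>Reduced words in the free product\<close>

locale two_groups = A: group A + B: group B
  for A :: "('a, 'm) monoid_scheme" and B :: "('b, 'n) monoid_scheme"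
begin

abbreviation reduced :: "('a + 'b) list \<Rightarrow> bool" where
  "reduced \<equiv> fp_reduced A B"

abbreviation fp_mult :: "('a + 'b) list \<Rightarrow> ('a + 'b) list \<Rightarrow> ('a + 'b) list" where
  "fp_mult x y \<equiv> foldr (fp_cons A B) x y"

definition letter_in :: "'a + 'b \<Rightarrow> bool" where
  "letter_in x \<longleftrightarrow> (case x of Inl a \<Rightarrow> a \<in> carrier A | Inr b \<Rightarrow> b \<in> carrier B)"

definition letter_nontrivial :: "'a + 'b \<Rightarrow> bool" where
  "letter_nontrivial x \<longleftrightarrow> (case x of Inl a \<Rightarrow> a \<noteq> \<one>\<^bsub>A\<^esub> | Inr b \<Rightarrow> b \<noteq> \<one>\<^bsub>B\<^esub>)"

definition letter_inv :: "'a + 'b \<Rightarrow> 'a + 'b" where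
  "letter_inv x = (case x of Inl a \<Rightarrow> Inl (inv\<^bsub>A\<^esub> a) | Inr b \<Rightarrow> Inr (inv\<^bsub>B\<^esub> b))"

text \<open>Junk unless both letters lie in the same factor.\<close>
definition letter_mult :: "'a + 'b \<Rightarrow> 'a + 'b \<Rightarrow> 'a + 'b" where
  "letter_mult x y =
     (case x of Inl a \<Rightarrow> Inl (a \<otimes>\<^bsub>A\<^esub> projl y) | Inr b \<Rightarrow> Inr (b \<otimes>\<^bsub>B\<^esub> projr y))"

definition fp_inv :: "('a + 'b) list \<Rightarrow> ('a + 'b) list" where
  "fp_inv w = rev (map letter_inv w)"

lemma isl_letter_inv [simp]: "isl (letter_inv x) = isl x"
  by (cases x) (auto simp: letter_inv_def)

lemma isl_letter_mult [simp]: "isl (letter_mult x y) = isl x"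
  by (cases x) (auto simp: letter_mult_def)

lemma letter_in_inv: "letter_in x \<Longrightarrow> letter_in (letter_inv x)"
  by (cases x) (auto simp: letter_in_def letter_inv_def)

lemma letter_nontrivial_inv: "letter_in x \<Longrightarrow> letter_nontrivial (letter_inv x) = letter_nontrivial x"
  by (cases x) (auto simp: letter_in_def letter_nontrivial_def letter_inv_def)

lemma letter_inv_inv: "letter_in x \<Longrightarrow> letter_inv (letter_inv x) = x"
  by (cases x) (auto simp: letter_in_def letter_inv_def)

lemma letter_in_mult:
  "letter_in x \<Longrightarrow> letter_in y \<Longrightarrow> isl x = isl y \<Longrightarrow> letter_in (letter_mult x y)"
  by (cases x; cases y) (auto simp: letter_in_def letter_mult_def)

lemma letter_mult_trivial_iff:
  assumes "letter_in x" "letter_in y" "isl x = isl y"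
  shows "\<not> letter_nontrivial (letter_mult x y) \<longleftrightarrow> y = letter_inv x"
proof (cases x)
  case (Inl a)
  then show ?thesis using assms A.inv_equality A.inv_comm A.r_inv
    by (cases y) (auto simp: letter_in_def letter_nontrivial_def letter_mult_def letter_inv_def)
next
  case (Inr b)
  then show ?thesis using assms B.inv_equality B.inv_comm B.r_inv
    by (cases y) (auto simp: letter_in_def letter_nontrivial_def letter_mult_def letter_inv_def)
qed

lemma fp_inv_Nil [simp]: "fp_inv [] = []"
  by (simp add: fp_inv_def)

lemma fp_inv_Nil_iff [simp]: "fp_inv w = [] \<longleftrightarrow> w = []"
  by (simp add: fp_inv_def)

lemma fp_inv_Cons: "fp_inv (x # w) = fp_inv w @ [letter_inv x]"
  by (simp add: fp_inv_def)

lemma last_fp_inv: "w \<noteq> [] \<Longrightarrow> last (fp_inv w) = letter_inv (hd w)"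
  by (cases w) (auto simp: fp_inv_def)

lemma fp_reduced_Cons:
  "reduced (x # w) \<longleftrightarrow>
     letter_in x \<and> letter_nontrivial x \<and> reduced w \<and> (w \<noteq> [] \<longrightarrow> isl (hd w) \<noteq> isl x)"
  by (cases x; cases w) (auto simp: letter_in_def letter_nontrivial_def split: sum.splits list.splits)

lemma fp_reduced_append:
  "reduced (u @ v) \<longleftrightarrow>
     reduced u \<and> reduced v \<and> (u \<noteq> [] \<longrightarrow> v \<noteq> [] \<longrightarrow> isl (last u) \<noteq> isl (hd v))"
  by (induction u) (auto simp: fp_reduced_Cons)

lemma fp_cons_same_side:
  "isl x = isl y \<Longrightarrow>
     fp_cons A B x (y # w) = (if letter_nontrivial (letter_mult x y) then letter_mult x y # w else w)"
  by (cases x; cases y) (auto simp: letter_nontrivial_def letter_mult_def)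

lemma fp_cons_other_side:
  "w = [] \<or> isl (hd w) \<noteq> isl x \<Longrightarrow> fp_cons A B x w = (if letter_nontrivial x then x # w else w)"
  by (cases x; cases w; cases "hd w") (auto simp: letter_nontrivial_def)

lemma fp_cons_reduced: "letter_in x \<Longrightarrow> reduced w \<Longrightarrow> reduced (fp_cons A B x w)"
proof (cases "w \<noteq> [] \<and> isl (hd w) = isl x")
  case True
  assume "letter_in x" "reduced w"
  moreover obtain y w' where "w = y # w'" "isl y = isl x" using True by (cases w) auto
  ultimately show ?thesis
    by (auto simp: fp_cons_same_side fp_reduced_Cons letter_in_mult)
qed (auto simp: fp_cons_other_side fp_reduced_Cons)

lemma fp_mult_reduced: "reduced x \<Longrightarrow> reduced y \<Longrightarrow> reduced (fp_mult x y)"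
  by (induction x) (auto simp: fp_reduced_Cons fp_cons_reduced)

lemma fp_cons_trivial: "\<not> letter_nontrivial x \<Longrightarrow> letter_in x \<Longrightarrow> reduced w \<Longrightarrow> fp_cons A B x w = w"
  by (cases x; cases w rule: list.exhaust; cases "hd w")
     (auto simp: letter_in_def letter_nontrivial_def fp_reduced_Cons)

lemma letter_mult_assoc:
  "letter_in x \<Longrightarrow> letter_in y \<Longrightarrow> letter_in z \<Longrightarrow> isl x = isl y \<Longrightarrow> isl y = isl z \<Longrightarrow>
     letter_mult (letter_mult x y) z = letter_mult x (letter_mult y z)"
  by (cases x; cases y; cases z) (auto simp: letter_in_def letter_mult_def A.m_assoc B.m_assoc)

lemma letter_mult_trivial_right:
  "letter_in x \<Longrightarrow> letter_in y \<Longrightarrow> isl x = isl y \<Longrightarrow> \<not> letter_nontrivial y \<Longrightarrow>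
     letter_mult x y = x"
  by (cases x; cases y) (auto simp: letter_in_def letter_nontrivial_def letter_mult_def)

lemma fp_cons_fp_cons:
  assumes x: "letter_in x" and y: "letter_in y" "isl x = isl y" and w: "reduced w"
  shows "fp_cons A B x (fp_cons A B y w) = fp_cons A B (letter_mult x y) w"
proof (cases "w \<noteq> [] \<and> isl (hd w) = isl y")
  case True
  then obtain z w' where w_eq: "w = z # w'" "isl z = isl y" by (cases w) auto
  have z: "letter_in z" "reduced w'" "w' = [] \<or> isl (hd w') \<noteq> isl z"
    using w w_eq by (auto simp: fp_reduced_Cons)
  show ?thesis
  proof (cases "letter_nontrivial (letter_mult y z)")
    case True
    then show ?thesis using x y z w_eq
      by (simp add: fp_cons_same_side letter_mult_assoc letter_in_mult)
  next
    case False
    then have "letter_mult x (letter_mult y z) = x"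
      using x y z w_eq by (simp add: letter_mult_trivial_right letter_in_mult)
    then show ?thesis using False x y z w_eq
      by (simp add: fp_cons_same_side fp_cons_other_side letter_mult_assoc)
  qed
next
  case False
  then show ?thesis using x y letter_mult_trivial_right[OF x y]
    by (cases "letter_nontrivial y") (auto simp: fp_cons_other_side fp_cons_same_side)
qed

lemma fp_mult_fp_cons:
  assumes x: "letter_in x" and w: "reduced w" and z: "reduced z"
  shows "fp_mult (fp_cons A B x w) z = fp_cons A B x (fp_mult w z)"
proof (cases "w \<noteq> [] \<and> isl (hd w) = isl x")
  case True
  then obtain y w' where w_eq: "w = y # w'" "isl y = isl x" by (cases w) auto
  have y: "letter_in y" "reduced w'" using w w_eq by (auto simp: fp_reduced_Cons)
  have wz: "reduced (fp_mult w' z)" using y(2) z by (rule fp_mult_reduced)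
  have "fp_cons A B x (fp_mult w z) = fp_cons A B (letter_mult x y) (fp_mult w' z)"
    using x y w_eq wz by (simp add: fp_cons_fp_cons)
  then show ?thesis
    using x y w_eq wz by (simp add: fp_cons_same_side fp_cons_trivial letter_in_mult)
next
  case False
  then show ?thesis
    using x fp_mult_reduced[OF w z] by (auto simp: fp_cons_other_side fp_cons_trivial)
qed

lemma fp_mult_assoc:
  "reduced x \<Longrightarrow> reduced y \<Longrightarrow> reduced z \<Longrightarrow> fp_mult (fp_mult x y) z = fp_mult x (fp_mult y z)"
  by (induction x) (auto simp: fp_reduced_Cons fp_mult_fp_cons fp_mult_reduced)

lemma fp_inv_reduced: "reduced w \<Longrightarrow> reduced (fp_inv w)"
  by (induction w)
     (auto simp: fp_reduced_Cons fp_inv_Cons fp_reduced_append last_fp_inv letter_in_inv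
                 letter_nontrivial_inv)

lemma fp_mult_fp_inv: "reduced w \<Longrightarrow> fp_mult (fp_inv w) w = []"
proof (induction w)
  case (Cons x w)
  then have "letter_in x" "reduced w" by (auto simp: fp_reduced_Cons)
  then have "fp_cons A B (letter_inv x) (x # w) = w"
    by (cases x) (auto simp: letter_in_def letter_inv_def)
  then show ?case using Cons \<open>reduced w\<close> by (simp add: fp_inv_Cons)
qed simp

lemma free_product_simps:
  "carrier (free_product A B) = {w. reduced w}"
  "x \<otimes>\<^bsub>free_product A B\<^esub> y = fp_mult x y"
  "\<one>\<^bsub>free_product A B\<^esub> = []"
  by (simp_all add: free_product_def)

lemma group_free_product: "group (free_product A B)"
  by (rule groupI)
     (auto simp: free_product_simps fp_mult_reduced fp_mult_assoc
           intro: fp_inv_reduced fp_mult_fp_inv)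

end

sublocale two_groups \<subseteq> FP: group "free_product A B"
  by (rule group_free_product)

context two_groups
begin

lemma inv_free_product: "reduced w \<Longrightarrow> inv\<^bsub>free_product A B\<^esub> w = fp_inv w"
  by (intro FP.inv_equality) (simp_all add: free_product_simps fp_inv_reduced fp_mult_fp_inv)

lemma fp_mult_append: "reduced (u @ w) \<Longrightarrow> fp_mult u w = u @ w"
  by (induction u) (auto simp: fp_reduced_Cons fp_cons_other_side)

definition fp_cancellation :: "('a + 'b) list \<Rightarrow> ('a + 'b) list \<Rightarrow> ('a + 'b) list \<Rightarrow> bool" where
  "fp_cancellation g h r \<longleftrightarrow>
     (\<exists>u k v. g = u @ k \<and> h = fp_inv k @ v \<and> r = u @ v) \<or>
     (\<exists>u k v s t. g = u @ s # k \<and> h = fp_inv k @ t # v \<and> isl s = isl t \<and>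
        letter_nontrivial (letter_mult s t) \<and> r = u @ letter_mult s t # v)"

lemma fp_cancellation_snoc:
  assumes "fp_cancellation g h r"
  shows "fp_cancellation (g @ [x]) (letter_inv x # h) r"
proof -
  have inv_snoc: "letter_inv x # fp_inv k @ v = fp_inv (k @ [x]) @ v" for k v
    by (simp add: fp_inv_def)
  from assms[unfolded fp_cancellation_def] show ?thesis
  proof (elim disjE exE conjE)
    fix u k v
    assume "g = u @ k" "h = fp_inv k @ v" "r = u @ v"
    then show ?thesis
      unfolding fp_cancellation_def using inv_snoc
      by (intro disjI1 exI[of _ u] exI[of _ "k @ [x]"] exI[of _ v]) simp
  next
    fix u k v s t
    assume "g = u @ s # k" "h = fp_inv k @ t # v" "isl s = isl t"
      "letter_nontrivial (letter_mult s t)" "r = u @ letter_mult s t # v"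
    then show ?thesis
      unfolding fp_cancellation_def using inv_snoc[of k "t # v"]
      by (intro disjI2 exI[of _ u] exI[of _ "k @ [x]"] exI[of _ v] exI[of _ s] exI[of _ t]) simp
  qed
qed

lemma fp_mult_cancellation:
  "reduced g \<Longrightarrow> reduced h \<Longrightarrow> fp_cancellation g h (fp_mult g h)"
proof (induction g arbitrary: h rule: rev_induct)
  case Nil
  then show ?case
    unfolding fp_cancellation_def by (intro disjI1 exI[of _ "[]"] exI[of _ "[]"] exI[of _ h]) simp
next
  case (snoc x g)
  have x: "letter_in x" "letter_nontrivial x" "reduced g" "g \<noteq> [] \<longrightarrow> isl (last g) \<noteq> isl x"
    using snoc.prems by (auto simp: fp_reduced_append fp_reduced_Cons)
  have mult_snoc: "fp_mult (g @ [x]) h = fp_mult g (fp_cons A B x h)" by simp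
  show ?case
  proof (cases "h \<noteq> [] \<and> isl (hd h) = isl x")
    case True
    then obtain y h' where h: "h = y # h'" "isl y = isl x" by (cases h) auto
    have y: "letter_in y" "reduced h'" "h' \<noteq> [] \<longrightarrow> isl (hd h') \<noteq> isl x"
      using snoc.prems h by (auto simp: fp_reduced_Cons)
    show ?thesis
    proof (cases "letter_nontrivial (letter_mult x y)")
      case True
      have "reduced (g @ letter_mult x y # h')"
        using x y h True by (auto simp: fp_reduced_append fp_reduced_Cons letter_in_mult)
      then have "fp_mult (g @ [x]) h = g @ letter_mult x y # h'"
        using mult_snoc h True by (simp add: fp_cons_same_side fp_mult_append)
      then show ?thesis
        unfolding fp_cancellation_def using h True
        by (intro disjI2 exI[of _ g] exI[of _ "[]"] exI[of _ h'] exI[of _ x] exI[of _ y]) auto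
    next
      case False
      then have "y = letter_inv x" using x y h letter_mult_trivial_iff by auto
      moreover have "fp_mult (g @ [x]) h = fp_mult g h'"
        using mult_snoc h False by (simp add: fp_cons_same_side)
      ultimately show ?thesis
        using fp_cancellation_snoc[OF snoc.IH[OF x(3) y(2)]] h by simp
    qed
  next
    case False
    have "reduced (g @ x # h)" using snoc.prems False by (auto simp: fp_reduced_append fp_reduced_Cons)
    then have "fp_mult (g @ [x]) h = (g @ [x]) @ h"
      using mult_snoc False x by (simp add: fp_cons_other_side fp_mult_append)
    then show ?thesis
      unfolding fp_cancellation_def
      by (intro disjI1 exI[of _ "g @ [x]"] exI[of _ "[]"] exI[of _ h]) simp
  qed
qed

definition letter_word :: "'a + 'b \<Rightarrow> ('a + 'b) list" where
  "letter_word x = fp_cons A B x []"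

lemma letter_word_reduced: "letter_in x \<Longrightarrow> reduced (letter_word x)"
  by (simp add: letter_word_def fp_cons_reduced)

lemma letter_word_nontrivial: "letter_nontrivial x \<Longrightarrow> letter_word x = [x]"
  by (simp add: letter_word_def fp_cons_other_side)

lemma letter_word_mult:
  "letter_in x \<Longrightarrow> letter_in y \<Longrightarrow> isl x = isl y \<Longrightarrow>
    fp_mult (letter_word x) (letter_word y) = letter_word (letter_mult x y)"
  by (simp add: letter_word_def fp_mult_fp_cons fp_cons_fp_cons fp_cons_reduced)

lemma letter_inv_mult:
  "letter_in x \<Longrightarrow> letter_in y \<Longrightarrow> isl x = isl y \<Longrightarrow>
    letter_inv (letter_mult x y) = letter_mult (letter_inv y) (letter_inv x)"
  by (cases x; cases y)
     (auto simp: letter_in_def letter_inv_def letter_mult_def A.inv_mult_group B.inv_mult_group)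

end

section \<open>Left-orders from quasi-morphisms\<close>

definition is_positive_cone :: "('g, 'm) monoid_scheme \<Rightarrow> 'g set \<Rightarrow> bool" where
  "is_positive_cone G P \<longleftrightarrow> P \<subseteq> carrier G \<and> \<one>\<^bsub>G\<^esub> \<notin> P \<and>
     (\<forall>a\<in>P. \<forall>b\<in>P. a \<otimes>\<^bsub>G\<^esub> b \<in> P) \<and>
     (\<forall>a\<in>carrier G. a \<noteq> \<one>\<^bsub>G\<^esub> \<longrightarrow> (a \<in> P \<longleftrightarrow> inv\<^bsub>G\<^esub> a \<notin> P))"

definition cone_sign :: "'g set \<Rightarrow> 'g \<Rightarrow> int" where
  "cone_sign P a = (if a \<in> P then 1 else -1)"

lemma left_order_positive_cone:
  assumes "group G" and order: "left_order G R"
  shows "is_positive_cone G (positive_cone G R)"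
proof -
  interpret G: group G by fact
  have irrefl: "\<And>x. x \<in> carrier G \<Longrightarrow> (x, x) \<notin> R"
    and trans: "\<And>x y z. x \<in> carrier G \<Longrightarrow> y \<in> carrier G \<Longrightarrow> z \<in> carrier G \<Longrightarrow>
      (x, y) \<in> R \<Longrightarrow> (y, z) \<in> R \<Longrightarrow> (x, z) \<in> R"
    and total: "\<And>x y. x \<in> carrier G \<Longrightarrow> y \<in> carrier G \<Longrightarrow> x \<noteq> y \<Longrightarrow> (x, y) \<in> R \<or> (y, x) \<in> R"
    and invariant: "\<And>g x y. g \<in> carrier G \<Longrightarrow> x \<in> carrier G \<Longrightarrow> y \<in> carrier G \<Longrightarrow>
      (x, y) \<in> R \<Longrightarrow> (g \<otimes>\<^bsub>G\<^esub> x, g \<otimes>\<^bsub>G\<^esub> y) \<in> R"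
    using order unfolding left_order_def by blast+
  let ?P = "positive_cone G R"
  have mult: "a \<otimes>\<^bsub>G\<^esub> b \<in> ?P" if "a \<in> ?P" "b \<in> ?P" for a b
  proof -
    have a: "a \<in> carrier G" "(\<one>\<^bsub>G\<^esub>, a) \<in> R" and b: "b \<in> carrier G" "(\<one>\<^bsub>G\<^esub>, b) \<in> R"
      using that by (auto simp: positive_cone_def)
    have "(a \<otimes>\<^bsub>G\<^esub> \<one>\<^bsub>G\<^esub>, a \<otimes>\<^bsub>G\<^esub> b) \<in> R" using invariant[OF a(1) _ b(1) b(2)] by simp
    then have "(a, a \<otimes>\<^bsub>G\<^esub> b) \<in> R" using a by simp
    then show ?thesis using trans[OF _ a(1) _ a(2)] a b by (auto simp: positive_cone_def)
  qed
  have inv_iff: "a \<in> ?P \<longleftrightarrow> inv\<^bsub>G\<^esub> a \<notin> ?P" if a: "a \<in> carrier G" "a \<noteq> \<one>\<^bsub>G\<^esub>" for a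
  proof
    assume "a \<in> ?P"
    then have "(\<one>\<^bsub>G\<^esub>, a) \<in> R" by (auto simp: positive_cone_def)
    then have "(inv\<^bsub>G\<^esub> a \<otimes>\<^bsub>G\<^esub> \<one>\<^bsub>G\<^esub>, inv\<^bsub>G\<^esub> a \<otimes>\<^bsub>G\<^esub> a) \<in> R"
      using a by (intro invariant) auto
    then have neg: "(inv\<^bsub>G\<^esub> a, \<one>\<^bsub>G\<^esub>) \<in> R" using a by simp
    show "inv\<^bsub>G\<^esub> a \<notin> ?P"
    proof
      assume "inv\<^bsub>G\<^esub> a \<in> ?P"
      then have "(\<one>\<^bsub>G\<^esub>, inv\<^bsub>G\<^esub> a) \<in> R" by (auto simp: positive_cone_def)
      then show False using trans[OF _ _ _ _ neg] irrefl a by auto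
    qed
  next
    assume not_pos: "inv\<^bsub>G\<^esub> a \<notin> ?P"
    show "a \<in> ?P"
    proof (rule ccontr)
      assume "a \<notin> ?P"
      then have "(a, \<one>\<^bsub>G\<^esub>) \<in> R" using total[of a "\<one>\<^bsub>G\<^esub>"] a by (auto simp: positive_cone_def)
      then have "(inv\<^bsub>G\<^esub> a \<otimes>\<^bsub>G\<^esub> a, inv\<^bsub>G\<^esub> a \<otimes>\<^bsub>G\<^esub> \<one>\<^bsub>G\<^esub>) \<in> R"
        using a by (intro invariant) auto
      then have "(\<one>\<^bsub>G\<^esub>, inv\<^bsub>G\<^esub> a) \<in> R" using a by simp
      then show False using not_pos a by (auto simp: positive_cone_def)
    qed
  qed
  have "?P \<subseteq> carrier G" "\<one>\<^bsub>G\<^esub> \<notin> ?P" using irrefl by (auto simp: positive_cone_def)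
  then show ?thesis unfolding is_positive_cone_def using mult inv_iff by blast
qed

lemma is_positive_coneD:
  assumes "is_positive_cone G P"
  shows positive_cone_subset: "P \<subseteq> carrier G"
    and one_notin_positive_cone: "\<one>\<^bsub>G\<^esub> \<notin> P"
    and positive_cone_mult: "a \<in> P \<Longrightarrow> b \<in> P \<Longrightarrow> a \<otimes>\<^bsub>G\<^esub> b \<in> P"
    and positive_cone_inv_iff:
      "a \<in> carrier G \<Longrightarrow> a \<noteq> \<one>\<^bsub>G\<^esub> \<Longrightarrow> a \<in> P \<longleftrightarrow> inv\<^bsub>G\<^esub> a \<notin> P"
  using assms unfolding is_positive_cone_def by blast+

lemma cone_sign_inv:
  "is_positive_cone G P \<Longrightarrow> a \<in> carrier G \<Longrightarrow> a \<noteq> \<one>\<^bsub>G\<^esub> \<Longrightarrow>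
    cone_sign P (inv\<^bsub>G\<^esub> a) = - cone_sign P a"
  by (auto simp: cone_sign_def positive_cone_inv_iff)

lemma cone_sign_mult:
  "is_positive_cone G P \<Longrightarrow> cone_sign P (a \<otimes>\<^bsub>G\<^esub> b) \<ge> cone_sign P a + cone_sign P b - 1"
  by (auto simp: cone_sign_def positive_cone_mult)

definition quasi_morphism_order :: "('g, 'm) monoid_scheme \<Rightarrow> ('g \<Rightarrow> int) \<Rightarrow> ('g \<times> 'g) set" where
  "quasi_morphism_order G \<phi> =
     {(x, y). x \<in> carrier G \<and> y \<in> carrier G \<and> \<phi> (inv\<^bsub>G\<^esub> x \<otimes>\<^bsub>G\<^esub> y) > 0}"

locale order_quasi_morphism = group G for G :: "('g, 'm) monoid_scheme" (structure) +
  fixes \<phi> :: "'g \<Rightarrow> int"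
  assumes nonzero: "g \<in> carrier G \<Longrightarrow> g \<noteq> \<one>\<^bsub>G\<^esub> \<Longrightarrow> \<phi> g \<noteq> 0"
    and inv: "g \<in> carrier G \<Longrightarrow> \<phi> (inv\<^bsub>G\<^esub> g) = - \<phi> g"
    and mult: "g \<in> carrier G \<Longrightarrow> h \<in> carrier G \<Longrightarrow> \<phi> (g \<otimes>\<^bsub>G\<^esub> h) \<ge> \<phi> g + \<phi> h - 1"
begin

lemma left_order: "left_order G (quasi_morphism_order G \<phi>)"
proof -
  let ?R = "quasi_morphism_order G \<phi>"
  have irrefl: "(x, x) \<notin> ?R" for x
    using inv[of \<one>] by (auto simp: quasi_morphism_order_def)
  have trans: "(x, z) \<in> ?R"
    if "x \<in> carrier G" "y \<in> carrier G" "z \<in> carrier G" "(x, y) \<in> ?R" "(y, z) \<in> ?R" for x y z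
  proof -
    have "y \<otimes> (inv y \<otimes> z) = z" using that by (simp add: m_assoc[symmetric])
    then have "inv x \<otimes> z = (inv x \<otimes> y) \<otimes> (inv y \<otimes> z)"
      using that by (simp add: m_assoc)
    then show ?thesis using mult[of "inv x \<otimes> y" "inv y \<otimes> z"] that
      by (simp add: quasi_morphism_order_def)
  qed
  have total: "(x, y) \<in> ?R \<or> (y, x) \<in> ?R" if "x \<in> carrier G" "y \<in> carrier G" "x \<noteq> y" for x y
  proof -
    have "inv x \<otimes> y \<noteq> \<one>" using that by (simp add: inv_solve_left')
    moreover have "inv y \<otimes> x = inv (inv x \<otimes> y)" using that by (simp add: inv_mult_group)
    ultimately show ?thesis using nonzero[of "inv x \<otimes> y"] inv[of "inv x \<otimes> y"] that
      by (simp add: quasi_morphism_order_def) (smt (verit))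
  qed
  have invariant: "(g \<otimes> x, g \<otimes> y) \<in> ?R"
    if "g \<in> carrier G" "x \<in> carrier G" "y \<in> carrier G" "(x, y) \<in> ?R" for g x y
  proof -
    have "inv g \<otimes> (g \<otimes> y) = y" using that by (simp add: m_assoc[symmetric])
    then have "inv (g \<otimes> x) \<otimes> (g \<otimes> y) = inv x \<otimes> y"
      using that by (simp add: inv_mult_group m_assoc)
    then show ?thesis using that by (simp add: quasi_morphism_order_def)
  qed
  have "?R \<subseteq> carrier G \<times> carrier G" by (auto simp: quasi_morphism_order_def)
  with irrefl total show ?thesis
    unfolding left_order_def by (intro conjI ballI impI) (blast intro: trans invariant)+
qed

lemma positive_cone: "positive_cone G (quasi_morphism_order G \<phi>) = {g \<in> carrier G. \<phi> g > 0}"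
  by (auto simp: positive_cone_def quasi_morphism_order_def)

end

section \<open>The quasi-morphism on the free product\<close>

definition junction :: "bool \<Rightarrow> bool \<Rightarrow> int" where
  "junction X Y = (if X \<and> \<not> Y then 1 else if \<not> X \<and> Y then -1 else 0)"

fun junction_after :: "bool option \<Rightarrow> bool \<Rightarrow> int" where
  "junction_after None Y = 0"
| "junction_after (Some X) Y = junction X Y"

lemma junction_after_range: "junction_after Z Y \<in> {-1, 0, 1}"
  by (cases Z) (auto simp: junction_def)

locale two_cones = two_groups A B
  for A :: "('a, 'm) monoid_scheme" and B :: "('b, 'n) monoid_scheme" +
  fixes PA :: "'a set" and PB :: "'b set"
  assumes cone_A: "is_positive_cone A PA" and cone_B: "is_positive_cone B PB"
begin

definition letter_sign :: "'a + 'b \<Rightarrow> int" where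
  "letter_sign x = (case x of Inl a \<Rightarrow> cone_sign PA a | Inr b \<Rightarrow> cone_sign PB b)"

fun fp_phi :: "('a + 'b) list \<Rightarrow> int" where
  "fp_phi [] = 0"
| "fp_phi [x] = letter_sign x"
| "fp_phi (x # y # w) = letter_sign x + junction (isl x) (isl y) + fp_phi (y # w)"

definition junction_at :: "('a + 'b) list \<Rightarrow> ('a + 'b) list \<Rightarrow> int" where
  "junction_at u v = (if u = [] \<or> v = [] then 0 else junction (isl (last u)) (isl (hd v)))"

lemma junction_at_Nil [simp]: "junction_at [] v = 0" "junction_at u [] = 0"
  by (simp_all add: junction_at_def)

lemma fp_phi_append: "fp_phi (u @ v) = fp_phi u + junction_at u v + fp_phi v"
proof (induction u rule: fp_phi.induct)
  case (2 x)
  then show ?case by (cases v) (auto simp: junction_at_def)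
qed (auto simp: junction_at_def)

lemma fp_phi_Cons: "fp_phi (x # w) = letter_sign x + junction_at [x] w + fp_phi w"
  using fp_phi_append[of "[x]" w] by simp

lemma letter_sign_inv:
  "letter_in x \<Longrightarrow> letter_nontrivial x \<Longrightarrow> letter_sign (letter_inv x) = - letter_sign x"
  using cone_sign_inv[OF cone_A] cone_sign_inv[OF cone_B]
  by (cases x) (auto simp: letter_in_def letter_nontrivial_def letter_inv_def letter_sign_def)

lemma letter_sign_mult:
  "isl x = isl y \<Longrightarrow> letter_sign (letter_mult x y) \<ge> letter_sign x + letter_sign y - 1"
  using cone_sign_mult[OF cone_A] cone_sign_mult[OF cone_B]
  by (cases x; cases y) (auto simp: letter_mult_def letter_sign_def)

lemma fp_phi_fp_inv: "reduced w \<Longrightarrow> fp_phi (fp_inv w) = - fp_phi w"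
proof (induction w)
  case (Cons x w)
  then have x: "letter_in x" "letter_nontrivial x" "reduced w" by (auto simp: fp_reduced_Cons)
  have "junction_at (fp_inv w) [letter_inv x] = - junction_at [x] w"
    by (cases "w = []") (auto simp: junction_at_def junction_def last_fp_inv)
  then show ?case
    using Cons.IH x by (simp add: fp_inv_Cons fp_phi_append fp_phi_Cons letter_sign_inv)
qed simp

lemma fp_phi_odd: "reduced w \<Longrightarrow> w \<noteq> [] \<Longrightarrow> odd (fp_phi w)"
proof (induction w rule: fp_phi.induct)
  case (2 x)
  then show ?case by (simp add: letter_sign_def cone_sign_def split: sum.split)
next
  case (3 x y w)
  then have "isl x \<noteq> isl y" "reduced (y # w)" by (auto simp: fp_reduced_Cons)
  then show ?case using 3 by (auto simp: letter_sign_def cone_sign_def junction_def split: sum.split)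
qed simp

lemma fp_phi_mult:
  assumes g: "reduced g" and h: "reduced h"
  shows "fp_phi (fp_mult g h) \<ge> fp_phi g + fp_phi h - 1"
  using fp_mult_cancellation[OF g h] unfolding fp_cancellation_def
proof (elim disjE exE conjE)
  fix u k v
  assume gh: "g = u @ k" "h = fp_inv k @ v" "fp_mult g h = u @ v"
  have "reduced (u @ v)" using gh fp_mult_reduced[OF g h] by simp
  \<comment> \<open>if \<open>u\<close>, \<open>k\<close>, \<open>v\<close> were all nonempty, the sides of \<open>last u\<close>, \<open>hd k\<close>, \<open>hd v\<close>
    would be pairwise distinct\<close>
  then have "junction_at u v + 1 \<ge> junction_at u k + junction_at (fp_inv k) v"
    using g h gh
    by (auto simp: junction_at_def junction_def fp_reduced_append last_fp_inv split: if_splits)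
  then show ?thesis
    using gh fp_phi_fp_inv[of k] g by (simp add: fp_phi_append fp_reduced_append)
next
  fix u k v s t
  assume gh: "g = u @ s # k" "h = fp_inv k @ t # v" "isl s = isl t"
    "fp_mult g h = u @ letter_mult s t # v"
  have "junction_at [s] k + junction_at (fp_inv k) [t] = 0"
    using gh(3) by (auto simp: junction_at_def junction_def last_fp_inv)
  moreover have "junction_at u (letter_mult s t # v) = junction_at u (s # k)"
    "junction_at [letter_mult s t] v = junction_at [t] v"
    "junction_at (fp_inv k) (t # v) = junction_at (fp_inv k) [t]"
    using gh(3) by (simp_all add: junction_at_def)
  ultimately show ?thesis
    using gh letter_sign_mult[OF gh(3)] fp_phi_fp_inv[of k] g
    by (simp add: fp_phi_append fp_phi_Cons fp_reduced_append fp_reduced_Cons)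
qed

lemma order_quasi_morphism_fp_phi: "order_quasi_morphism (free_product A B) fp_phi"
  by unfold_locales
     (auto simp: free_product_simps inv_free_product fp_phi_fp_inv fp_phi_mult dest: fp_phi_odd)

definition fits_after :: "bool option \<Rightarrow> ('a + 'b) list \<Rightarrow> bool" where
  "fits_after X s \<longleftrightarrow> s = [] \<or> X \<noteq> Some (isl (hd s))"

definition phi_after :: "bool option \<Rightarrow> ('a + 'b) list \<Rightarrow> int" where
  "phi_after X s = (if s = [] then 0 else junction_after X (isl (hd s))) + fp_phi s"

lemma phi_after_None [simp]: "phi_after None s = fp_phi s"
  by (simp add: phi_after_def)

end

section \<open>Weighted automata and one-counter languages\<close>

inductive weighted_run :: "('s \<Rightarrow> nat option \<Rightarrow> int \<Rightarrow> 's \<Rightarrow> bool) \<Rightarrow> 's \<Rightarrow> nat list \<Rightarrow> int \<Rightarrow> 's \<Rightarrow> bool"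
  for \<delta> :: "'s \<Rightarrow> nat option \<Rightarrow> int \<Rightarrow> 's \<Rightarrow> bool" where
  weighted_run_Nil: "weighted_run \<delta> p [] 0 p"
| weighted_run_step: "\<delta> p a d q \<Longrightarrow> weighted_run \<delta> q w k r \<Longrightarrow>
     weighted_run \<delta> p (case a of None \<Rightarrow> w | Some x \<Rightarrow> x # w) (d + k) r"

definition positive_weight_lang ::
  "('s \<Rightarrow> nat option \<Rightarrow> int \<Rightarrow> 's \<Rightarrow> bool) \<Rightarrow> 's \<Rightarrow> 's set \<Rightarrow> nat list set" where
  "positive_weight_lang \<delta> p0 F = {w. \<exists>k q. weighted_run \<delta> p0 w k q \<and> q \<in> F \<and> k > 0}"

lemma weighted_run_silent: "\<delta> p None d q \<Longrightarrow> weighted_run \<delta> q w k r \<Longrightarrow> weighted_run \<delta> p w (d + k) r"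
  using weighted_run_step[of \<delta> p None] by simp

lemma weighted_run_read: "\<delta> p (Some x) 0 q \<Longrightarrow> weighted_run \<delta> q w k r \<Longrightarrow> weighted_run \<delta> p (x # w) k r"
  using weighted_run_step[of \<delta> p "Some x" 0] by simp

lemma weighted_run_append:
  "weighted_run \<delta> p u k q \<Longrightarrow> weighted_run \<delta> q w l r \<Longrightarrow> weighted_run \<delta> p (u @ w) (k + l) r"
proof (induction rule: weighted_run.induct)
  case (weighted_run_step p a d q u k r')
  then have "weighted_run \<delta> p (case a of None \<Rightarrow> u @ w | Some x \<Rightarrow> x # u @ w) (d + (k + l)) r"
    by (intro weighted_run.weighted_run_step) auto
  then show ?case by (cases a) (auto simp: add.assoc)
qed simp

lemma weighted_run_lists:
  assumes "\<And>p a d q. \<delta> p a d q \<Longrightarrow> set_option a \<subseteq> X"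
  shows "weighted_run \<delta> p w k q \<Longrightarrow> w \<in> lists X"
  by (induction rule: weighted_run.induct) (auto dest: assms split: option.splits)

text \<open>The accumulated weight is stored as a sign bit \<open>b\<close> and the counter value \<open>c\<close>. A step of
  the counter automaton tests \<open>c = 0\<close>, pops one symbol unless \<open>c = 0\<close> and pushes \<open>n\<close> symbols;
  \<open>counter_update b (c = 0) d = (b', n)\<close> adds \<open>d \<in> {-1, 0, 1}\<close> in this way.\<close>

definition signed_count :: "bool \<Rightarrow> nat \<Rightarrow> int" where
  "signed_count b c = (if b then int c else - int c)"

definition counter_update :: "bool \<Rightarrow> bool \<Rightarrow> int \<Rightarrow> bool \<times> nat" where
  "counter_update b z d =
     (if d = 0 then (b, if z then 0 else 1)
      else if z then (0 < d, 1)
      else if b = (0 < d) then (b, 2) else (b, 0))"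

lemma signed_count_update:
  "counter_update b (c = 0) d = (b', n) \<Longrightarrow> d \<in> {-1, 0, 1} \<Longrightarrow>
    signed_count b' (if c = 0 then n else c - 1 + n) = signed_count b c + d"
  by (auto simp: counter_update_def signed_count_def split: if_splits)

context
  fixes \<delta> :: "'s::countable \<Rightarrow> nat option \<Rightarrow> int \<Rightarrow> 's \<Rightarrow> bool" and F :: "'s set"
begin

text \<open>State \<open>Some (p, b)\<close> simulates \<open>p\<close> with weight of sign \<open>b\<close>; the only final state \<open>None\<close>
  is entered from a final \<open>p\<close> when the weight is positive.\<close>

definition counter_simulation :: "oca_trans set" where
  "counter_simulation =
     (\<lambda>((p, a, d, q), b, z). (to_nat (Some (p, b)), a, z,
         to_nat (Some (q, fst (counter_update b z d))), snd (counter_update b z d))) `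
       ({(p, a, d, q). \<delta> p a d q} \<times> UNIV \<times> UNIV) \<union>
     (\<lambda>f. (to_nat (Some (f, True)), None, False, to_nat (None :: ('s \<times> bool) option), 0)) ` F"

lemma counter_simulation_complete:
  assumes weights: "\<And>p a d q. \<delta> p a d q \<Longrightarrow> d \<in> {-1, 0, 1}"
  shows "weighted_run \<delta> p w k q \<Longrightarrow> q \<in> F \<Longrightarrow> signed_count b c + k > 0 \<Longrightarrow>
    \<exists>e. oca_run counter_simulation (to_nat (Some (p, b))) w c (to_nat (None :: ('s \<times> bool) option)) e"
proof (induction arbitrary: b c rule: weighted_run.induct)
  case (weighted_run_Nil p)
  then have "b" "c \<noteq> 0" by (auto simp: signed_count_def split: if_splits)
  moreover have "(to_nat (Some (p, True)), None, False, to_nat (None :: ('s \<times> bool) option), 0)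
      \<in> counter_simulation"
    using weighted_run_Nil by (auto simp: counter_simulation_def)
  ultimately show ?case
    by (intro exI) (rule oca_step[where a = None, simplified], auto intro: oca_refl)
next
  case (weighted_run_step p a d q w k r)
  obtain b' n where upd: "counter_update b (c = 0) d = (b', n)" by fastforce
  let ?c' = "if c = 0 then n else c - 1 + n"
  have "signed_count b' ?c' = signed_count b c + d"
    using signed_count_update[OF upd weights[OF weighted_run_step(1)]] .
  then obtain e where "oca_run counter_simulation (to_nat (Some (q, b'))) w ?c'
      (to_nat (None :: ('s \<times> bool) option)) e"
    using weighted_run_step by fastforce
  moreover have "(to_nat (Some (p, b)), a, c = 0, to_nat (Some (q, b')), n) \<in> counter_simulation"
    using weighted_run_step(1) upd unfolding counter_simulation_def
    by (intro UnI1 image_eqI[where x = "((p, a, d, q), b, c = 0)"]) auto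
  ultimately show ?case by (blast intro: oca_step)
qed

lemma counter_simulation_accept_final:
  "oca_run counter_simulation s w c r e \<Longrightarrow> s = to_nat (None :: ('s \<times> bool) option) \<Longrightarrow>
    w = []"
  by (cases rule: oca_run.cases) (auto simp: counter_simulation_def)

lemma counter_simulation_sound:
  assumes weights: "\<And>p a d q. \<delta> p a d q \<Longrightarrow> d \<in> {-1, 0, 1}"
  shows "oca_run counter_simulation s w c r e \<Longrightarrow> s = to_nat (Some (p, b)) \<Longrightarrow>
    r = to_nat (None :: ('s \<times> bool) option) \<Longrightarrow>
    \<exists>k q. weighted_run \<delta> p w k q \<and> q \<in> F \<and> signed_count b c + k > 0"
proof (induction arbitrary: p b rule: oca_run.induct)
  case (oca_step s a c q n w r e)
  consider (simulated) d q' where "\<delta> p a d q'"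
      "q = to_nat (Some (q', fst (counter_update b (c = 0) d)))" "n = snd (counter_update b (c = 0) d)"
    | (accept) "p \<in> F" "b" "a = None" "c \<noteq> 0" "q = to_nat (None :: ('s \<times> bool) option)"
    using oca_step(1,4) unfolding counter_simulation_def by auto
  then show ?case
  proof cases
    case simulated
    obtain b' where upd: "counter_update b (c = 0) d = (b', n)"
      using simulated(3) by (metis prod.collapse)
    let ?c' = "if c = 0 then n else c - 1 + n"
    obtain k q'' where "weighted_run \<delta> q' w k q''" "q'' \<in> F" "signed_count b' ?c' + k > 0"
      using oca_step(3)[OF _ oca_step(5)] simulated(2) upd by auto
    moreover have "signed_count b' ?c' = signed_count b c + d"
      using signed_count_update[OF upd weights[OF simulated(1)]] .
    ultimately show ?thesis
      using weighted_run_step[of \<delta>, OF simulated(1)] by (intro exI[of _ "d + k"] exI[of _ q'']) auto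
  next
    case accept
    then have "w = []" using counter_simulation_accept_final oca_step(2) by blast
    then show ?thesis
      using accept
      by (intro exI[of _ 0] exI[of _ p]) (auto simp: signed_count_def intro: weighted_run_Nil)
  qed
qed simp

theorem one_counter_lang_positive_weight:
  assumes finite_trans: "finite {(p, a, d, q). \<delta> p a d q}" and "finite F"
    and weights: "\<And>p a d q. \<delta> p a d q \<Longrightarrow> d \<in> {-1, 0, 1}"
    and letters: "\<And>p a d q. \<delta> p a d q \<Longrightarrow> set_option a \<subseteq> X"
  shows "one_counter_lang X (positive_weight_lang \<delta> p0 F)"
proof -
  let ?T = counter_simulation
  let ?q0 = "to_nat (Some (p0, True))" and ?acc = "to_nat (None :: ('s \<times> bool) option)"
  let ?Q = "{?q0, ?acc} \<union> (\<lambda>(p, a, z, q, n). p) ` ?T \<union> (\<lambda>(p, a, z, q, n). q) ` ?T"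
  have "finite ?T"
    using finite_trans \<open>finite F\<close> by (simp add: counter_simulation_def)
  moreover have "\<forall>(p, a, z, q, n) \<in> ?T. p \<in> ?Q \<and> q \<in> ?Q \<and> set_option a \<subseteq> X"
  proof clarify
    fix p a z q n assume t: "(p, a, z, q, n) \<in> ?T"
    have "p \<in> ?Q" "q \<in> ?Q"
      using rev_image_eqI[OF t, of p "\<lambda>(p, a, z, q, n). p"]
        rev_image_eqI[OF t, of q "\<lambda>(p, a, z, q, n). q"] by auto
    moreover have "set_option a \<subseteq> X"
      using t by (auto simp: counter_simulation_def dest: letters)
    ultimately show "p \<in> ?Q \<and> q \<in> ?Q \<and> set_option a \<subseteq> X" by blast
  qed
  moreover have "positive_weight_lang \<delta> p0 F = oca_lang ?q0 {?acc} ?T"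
  proof (intro equalityI subsetI)
    fix w assume "w \<in> positive_weight_lang \<delta> p0 F"
    then show "w \<in> oca_lang ?q0 {?acc} ?T"
      using counter_simulation_complete[OF weights, where b = True and c = 0]
      by (fastforce simp: positive_weight_lang_def oca_lang_def signed_count_def)
  next
    fix w assume "w \<in> oca_lang ?q0 {?acc} ?T"
    then show "w \<in> positive_weight_lang \<delta> p0 F"
      using counter_simulation_sound[OF weights, where p = p0 and b = True and c = 0]
      by (fastforce simp: positive_weight_lang_def oca_lang_def signed_count_def)
  qed
  ultimately show ?thesis
    unfolding one_counter_lang_def
    by (intro exI[of _ ?Q] exI[of _ ?q0] exI[of _ "{?acc}"] exI[of _ ?T]) auto
qed

end

section \<open>An automaton for the positive cone\<close>

lemma (in monoid) eval_word_closed: "f ` set w \<subseteq> carrier G \<Longrightarrow> eval_word G f w \<in> carrier G"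
  by (induction w) (auto simp: eval_word_def)

lemma (in monoid) eval_word_append:
  "f ` set u \<subseteq> carrier G \<Longrightarrow> f ` set v \<subseteq> carrier G \<Longrightarrow>
    eval_word G f (u @ v) = eval_word G f u \<otimes> eval_word G f v"
proof (induction u)
  case (Cons x u)
  then show ?case
    using eval_word_closed[of f u] eval_word_closed[of f v] by (simp add: eval_word_def m_assoc)
qed (simp add: eval_word_closed[unfolded eval_word_def] eval_word_def)

text \<open>The alphabet for \<open>A * B\<close> consists of triples (side, sign, letter of that side).\<close>

definition letter_code :: "bool \<Rightarrow> bool \<Rightarrow> nat \<Rightarrow> nat" where
  "letter_code Y e x = to_nat (Y, e, x)"

text \<open>\<open>After Z\<close>: a syllable of side \<open>Z\<close> (none yet if \<open>Z = None\<close>) has just been read;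
  \<open>Before Y e\<close>: a syllable of side \<open>Y\<close> and sign \<open>e\<close> comes next; \<open>Pos Y q\<close>: reading the spelling
  of a positive syllable, the DFA being in state \<open>q\<close>; \<open>Neg Y q\<close>: reading a negative syllable
  backwards, \<open>q\<close> being the DFA state reached on the part not yet read.\<close>

datatype cone_state = After "bool option" | Before bool bool | Pos bool nat | Neg bool nat

instance cone_state :: countable
  by countable_datatype

text \<open>Side \<open>True\<close> is the factor \<open>A\<close> (letters \<open>Inl\<close>), side \<open>False\<close> the factor \<open>B\<close>.\<close>

locale regular_cones = two_cones A B PA PB
  for A :: "('a, 'm) monoid_scheme" and B :: "('b, 'n) monoid_scheme" and PA PB +
  fixes fA :: "nat \<Rightarrow> 'a" and fB :: "nat \<Rightarrow> 'b"
    and X :: "bool \<Rightarrow> nat set" and Q :: "bool \<Rightarrow> nat set" and q0 :: "bool \<Rightarrow> nat"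
    and F :: "bool \<Rightarrow> nat set" and \<delta> :: "bool \<Rightarrow> nat \<Rightarrow> nat \<Rightarrow> nat"
  assumes finite_X: "finite (X Y)" and finite_Q: "finite (Q Y)" and q0_in_Q: "q0 Y \<in> Q Y"
    and F_subset_Q: "F Y \<subseteq> Q Y" and \<delta>_in_Q: "q \<in> Q Y \<Longrightarrow> x \<in> X Y \<Longrightarrow> \<delta> Y q x \<in> Q Y"
    and fA_closed: "fA ` X True \<subseteq> carrier A" and fB_closed: "fB ` X False \<subseteq> carrier B"
    and lang_A: "eval_word A fA ` dfa_lang (X True) (Q True) (q0 True) (F True) (\<delta> True) = PA"
    and lang_B: "eval_word B fB ` dfa_lang (X False) (Q False) (q0 False) (F False) (\<delta> False) = PB"
begin

abbreviation syllable_lang :: "bool \<Rightarrow> nat list set" where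
  "syllable_lang Y \<equiv> dfa_lang (X Y) (Q Y) (q0 Y) (F Y) (\<delta> Y)"

definition side_letter :: "bool \<Rightarrow> nat \<Rightarrow> 'a + 'b" where
  "side_letter Y x = (if Y then Inl (fA x) else Inr (fB x))"

definition side_eval :: "bool \<Rightarrow> nat list \<Rightarrow> 'a + 'b" where
  "side_eval Y u = (if Y then Inl (eval_word A fA u) else Inr (eval_word B fB u))"

lemma isl_side_letter [simp]: "isl (side_letter Y x) = Y"
  by (simp add: side_letter_def)

lemma isl_side_eval [simp]: "isl (side_eval Y u) = Y"
  by (simp add: side_eval_def)

lemma letter_in_side_letter: "x \<in> X Y \<Longrightarrow> letter_in (side_letter Y x)"
  using fA_closed fB_closed by (auto simp: side_letter_def letter_in_def)

lemma letter_in_side_eval: "u \<in> lists (X Y) \<Longrightarrow> letter_in (side_eval Y u)"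
proof (cases Y)
  case True
  moreover assume "u \<in> lists (X Y)"
  ultimately have "fA ` set u \<subseteq> carrier A" using fA_closed by auto
  then show ?thesis using True by (simp add: side_eval_def letter_in_def A.eval_word_closed)
next
  case False
  moreover assume "u \<in> lists (X Y)"
  ultimately have "fB ` set u \<subseteq> carrier B" using fB_closed by auto
  then show ?thesis using False by (simp add: side_eval_def letter_in_def B.eval_word_closed)
qed

lemma side_eval_Nil: "side_eval Y [] = (if Y then Inl \<one>\<^bsub>A\<^esub> else Inr \<one>\<^bsub>B\<^esub>)"
  by (simp add: side_eval_def eval_word_def)

lemma side_eval_Cons:
  "x \<in> X Y \<Longrightarrow> side_eval Y (x # u) = letter_mult (side_letter Y x) (side_eval Y u)"
  by (simp add: side_eval_def side_letter_def letter_mult_def eval_word_def)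

lemma side_eval_syllable_lang:
  "x \<in> side_eval Y ` syllable_lang Y \<longleftrightarrow> isl x = Y \<and> letter_sign x = 1"
proof -
  have "side_eval True ` syllable_lang True = Inl ` PA"
    unfolding lang_A[symmetric] by (simp add: side_eval_def image_image)
  moreover have "side_eval False ` syllable_lang False = Inr ` PB"
    unfolding lang_B[symmetric] by (simp add: side_eval_def image_image)
  ultimately show ?thesis
    by (cases x; cases Y) (auto simp: letter_sign_def cone_sign_def)
qed

lemma letter_sign_positiveD: "letter_sign x = 1 \<Longrightarrow> letter_in x \<and> letter_nontrivial x"
  using positive_cone_subset[OF cone_A] positive_cone_subset[OF cone_B]
    one_notin_positive_cone[OF cone_A] one_notin_positive_cone[OF cone_B]
  by (cases x) (auto simp: letter_sign_def cone_sign_def letter_in_def letter_nontrivial_def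
      split: if_splits)

lemma letter_sign_inv_positive:
  "letter_in x \<Longrightarrow> letter_nontrivial x \<Longrightarrow> letter_sign x \<noteq> 1 \<Longrightarrow> letter_sign (letter_inv x) = 1"
  using letter_sign_inv[of x] by (auto simp: letter_sign_def cone_sign_def split: sum.splits)

definition alphabet :: "nat set" where
  "alphabet = (\<lambda>(Y, e, x). letter_code Y e x) ` {(Y, e, x). x \<in> X Y}"

definition gen_word :: "nat \<Rightarrow> ('a + 'b) list" where
  "gen_word n = (case from_nat n of (Y, e, x) \<Rightarrow>
     if x \<in> X Y then letter_word (if e then side_letter Y x else letter_inv (side_letter Y x)) else [])"

abbreviation ev :: "nat list \<Rightarrow> ('a + 'b) list" where
  "ev \<equiv> eval_word (free_product A B) gen_word"

lemma finite_alphabet: "finite alphabet"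
proof -
  have "X Y \<subseteq> X True \<union> X False" for Y by (cases Y) auto
  then have "{(Y, e :: bool, x). x \<in> X Y} \<subseteq> UNIV \<times> UNIV \<times> (X True \<union> X False)" by auto
  moreover have "finite (UNIV \<times> UNIV \<times> (X True \<union> X False) :: (bool \<times> bool \<times> nat) set)"
    by (intro finite_cartesian_product) (simp_all add: finite_X)
  ultimately have "finite {(Y, e :: bool, x). x \<in> X Y}" by (rule finite_subset)
  then show ?thesis by (simp add: alphabet_def)
qed

lemma letter_code_in_alphabet: "x \<in> X Y \<Longrightarrow> letter_code Y e x \<in> alphabet"
  unfolding alphabet_def by (rule image_eqI[where x = "(Y, e, x)"]) auto

lemma gen_word_code:
  "x \<in> X Y \<Longrightarrow>
    gen_word (letter_code Y e x) = letter_word (if e then side_letter Y x else letter_inv (side_letter Y x))"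
  by (simp add: gen_word_def letter_code_def)

lemma gen_word_reduced: "reduced (gen_word n)"
  by (auto simp: gen_word_def letter_word_reduced letter_in_side_letter letter_in_inv split: prod.split)

lemma ev_reduced: "reduced (ev w)"
  using FP.eval_word_closed[of gen_word w] gen_word_reduced by (auto simp: free_product_simps)

lemma ev_Nil: "ev [] = []"
  by (simp add: eval_word_def free_product_simps)

lemma ev_Cons: "ev (n # w) = fp_mult (gen_word n) (ev w)"
  by (simp add: eval_word_def free_product_simps)

lemma ev_append: "ev (u @ v) = fp_mult (ev u) (ev v)"
  using FP.eval_word_append[of gen_word u v] gen_word_reduced by (auto simp: free_product_simps)

lemma ev_positive_syllable:
  "u \<in> lists (X Y) \<Longrightarrow> ev (map (letter_code Y True) u) = letter_word (side_eval Y u)"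
proof (induction u)
  case Nil
  then show ?case
    by (simp add: ev_Nil side_eval_Nil letter_word_def fp_cons_other_side letter_nontrivial_def)
next
  case (Cons x u)
  then show ?case
    by (simp add: ev_Cons gen_word_code letter_word_mult letter_in_side_letter letter_in_side_eval
        side_eval_Cons)
qed

lemma ev_negative_syllable:
  "u \<in> lists (X Y) \<Longrightarrow> ev (map (letter_code Y False) (rev u)) = letter_word (letter_inv (side_eval Y u))"
proof (induction u)
  case Nil
  then show ?case
    by (simp add: ev_Nil side_eval_Nil letter_word_def fp_cons_other_side letter_nontrivial_def
        letter_inv_def)
next
  case (Cons x u)
  have "ev [letter_code Y False x] = letter_word (letter_inv (side_letter Y x))"
    using Cons.prems letter_in_side_letter[of x Y]
    by (simp add: ev_Cons ev_Nil gen_word_code fp_mult_append letter_word_reduced letter_in_inv)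
  then show ?case
    using Cons letter_in_side_letter[of x Y] letter_in_side_eval[of u Y]
    by (simp add: ev_append letter_word_mult letter_in_inv letter_inv_mult side_eval_Cons)
qed

definition syllable_words :: "bool \<Rightarrow> bool \<Rightarrow> nat list set" where
  "syllable_words Y e = (if e then map (letter_code Y True) ` syllable_lang Y
     else (\<lambda>u. map (letter_code Y False) (rev u)) ` syllable_lang Y)"

lemma ev_syllable_word:
  assumes "u \<in> syllable_words Y e"
  shows "\<exists>x. ev u = [x] \<and> isl x = Y \<and> letter_in x \<and> letter_nontrivial x \<and>
    letter_sign x = (if e then 1 else -1)"
proof -
  obtain v where v: "v \<in> syllable_lang Y"
    and u: "u = (if e then map (letter_code Y True) v else map (letter_code Y False) (rev v))"
    using assms by (auto simp: syllable_words_def split: if_splits)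
  have v_lists: "v \<in> lists (X Y)" using v by (simp add: dfa_lang_def)
  have "letter_sign (side_eval Y v) = 1" using v side_eval_syllable_lang by blast
  then have pos: "letter_in (side_eval Y v)" "letter_nontrivial (side_eval Y v)"
    "letter_sign (side_eval Y v) = 1"
    using letter_sign_positiveD by blast+
  show ?thesis
  proof (cases e)
    case True
    then show ?thesis
      using pos u v_lists by (simp add: ev_positive_syllable letter_word_nontrivial)
  next
    case False
    then show ?thesis
      using pos u v_lists
      by (simp add: ev_negative_syllable letter_word_nontrivial letter_nontrivial_inv letter_in_inv
          letter_sign_inv)
  qed
qed

lemma syllable_word_exists:
  assumes "letter_in x" "letter_nontrivial x"
  shows "\<exists>e u. u \<in> syllable_words (isl x) e \<and> ev u = [x] \<and> letter_sign x = (if e then 1 else -1)"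
proof (cases "letter_sign x = 1")
  case True
  then obtain v where "v \<in> syllable_lang (isl x)" "side_eval (isl x) v = x"
    using side_eval_syllable_lang[of x "isl x"] by auto
  then show ?thesis
    using assms True
    by (intro exI[of _ True] exI[of _ "map (letter_code (isl x) True) v"])
       (auto simp: syllable_words_def dfa_lang_def ev_positive_syllable letter_word_nontrivial)
next
  case False
  then have "letter_sign (letter_inv x) = 1" using assms letter_sign_inv_positive by blast
  then obtain v where "v \<in> syllable_lang (isl x)" "side_eval (isl x) v = letter_inv x"
    using side_eval_syllable_lang[of "letter_inv x" "isl x"] by auto
  moreover have "letter_sign x = -1"
    using False by (auto simp: letter_sign_def cone_sign_def split: sum.split)
  ultimately show ?thesis
    using assms
    by (intro exI[of _ False] exI[of _ "map (letter_code (isl x) False) (rev v)"])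
       (auto simp: syllable_words_def dfa_lang_def ev_negative_syllable letter_inv_inv
         letter_word_nontrivial)
qed

inductive cone_step :: "cone_state \<Rightarrow> nat option \<Rightarrow> int \<Rightarrow> cone_state \<Rightarrow> bool" where
  enter: "Z \<noteq> Some Y \<Longrightarrow> cone_step (After Z) None (junction_after Z Y) (Before Y e)"
| pos_begin: "cone_step (Before Y True) None 1 (Pos Y (q0 Y))"
| neg_begin: "q \<in> F Y \<Longrightarrow> cone_step (Before Y False) None (-1) (Neg Y q)"
| pos_read: "q \<in> Q Y \<Longrightarrow> x \<in> X Y \<Longrightarrow>
    cone_step (Pos Y q) (Some (letter_code Y True x)) 0 (Pos Y (\<delta> Y q x))"
| pos_end: "q \<in> F Y \<Longrightarrow> cone_step (Pos Y q) None 0 (After (Some Y))"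
| neg_read: "q \<in> Q Y \<Longrightarrow> x \<in> X Y \<Longrightarrow>
    cone_step (Neg Y (\<delta> Y q x)) (Some (letter_code Y False x)) 0 (Neg Y q)"
| neg_end: "cone_step (Neg Y (q0 Y)) None 0 (After (Some Y))"

definition after_inv :: "bool option \<Rightarrow> nat list \<Rightarrow> int \<Rightarrow> bool" where
  "after_inv Z w k \<longleftrightarrow> fits_after Z (ev w) \<and> k = phi_after Z (ev w)"

text \<open>The input and weight of a run from a state to a final state.\<close>

fun state_inv :: "cone_state \<Rightarrow> nat list \<Rightarrow> int \<Rightarrow> bool" where
  "state_inv (After Z) w k \<longleftrightarrow> after_inv Z w k"
| "state_inv (Before Y e) w k \<longleftrightarrow>
    (\<exists>u v. w = u @ v \<and> u \<in> syllable_words Y e \<and> after_inv (Some Y) v (k - (if e then 1 else -1)))"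
| "state_inv (Pos Y q) w k \<longleftrightarrow>
    (\<exists>u v. w = map (letter_code Y True) u @ v \<and> u \<in> lists (X Y) \<and>
      fold (\<lambda>x q. \<delta> Y q x) u q \<in> F Y \<and> after_inv (Some Y) v k)"
| "state_inv (Neg Y q) w k \<longleftrightarrow>
    (\<exists>u v. w = map (letter_code Y False) (rev u) @ v \<and> u \<in> lists (X Y) \<and>
      fold (\<lambda>x q. \<delta> Y q x) u (q0 Y) = q \<and> after_inv (Some Y) v k)"

lemma after_inv_syllable:
  assumes u: "u \<in> syllable_words Y e" and "Z \<noteq> Some Y" and v: "after_inv (Some Y) v k"
  shows "after_inv Z (u @ v) (junction_after Z Y + (if e then 1 else -1) + k)"
proof -
  obtain x where x: "ev u = [x]" "isl x = Y" "letter_in x" "letter_nontrivial x"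
    "letter_sign x = (if e then 1 else -1)"
    using ev_syllable_word[OF u] by blast
  let ?s = "ev v"
  have fits: "?s = [] \<or> isl (hd ?s) \<noteq> isl x" using v x(2) by (auto simp: after_inv_def fits_after_def)
  have "ev (u @ v) = x # ?s"
    using x fits by (simp add: ev_append fp_cons_other_side)
  moreover have "phi_after (Some Y) ?s = junction_at [x] ?s + fp_phi ?s"
    using x(2) by (simp add: phi_after_def junction_at_def)
  ultimately show ?thesis
    using assms x by (simp add: after_inv_def fits_after_def phi_after_def fp_phi_Cons)
qed

lemma state_inv_step:
  assumes step: "cone_step s a d t" and inv: "state_inv t w k"
  shows "state_inv s (case a of None \<Rightarrow> w | Some x \<Rightarrow> x # w) (d + k)"
  using step
proof cases
  case (enter Z Y e)
  then show ?thesis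
    using inv after_inv_syllable[of _ Y e Z] by (fastforce simp: algebra_simps)
next
  case (pos_begin Y)
  then show ?thesis
    using inv by (fastforce simp: syllable_words_def dfa_lang_def)
next
  case (neg_begin q Y)
  then show ?thesis
    using inv by (fastforce simp: syllable_words_def dfa_lang_def)
next
  case (pos_read q Y x)
  then obtain u v where "w = map (letter_code Y True) u @ v" "u \<in> lists (X Y)"
    "fold (\<lambda>x q. \<delta> Y q x) u (\<delta> Y q x) \<in> F Y" "after_inv (Some Y) v k"
    using inv by auto
  then show ?thesis
    unfolding pos_read state_inv.simps option.case add_0
    by (intro exI[of _ "x # u"] exI[of _ v]) (use pos_read in auto)
next
  case (pos_end q Y)
  then show ?thesis
    unfolding pos_end state_inv.simps option.case add_0
    by (intro exI[of _ "[]"] exI[of _ w]) (use pos_end inv in auto)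
next
  case (neg_read q Y x)
  then obtain u v where "w = map (letter_code Y False) (rev u) @ v" "u \<in> lists (X Y)"
    "fold (\<lambda>x q. \<delta> Y q x) u (q0 Y) = q" "after_inv (Some Y) v k"
    using inv by auto
  then show ?thesis
    unfolding neg_read state_inv.simps option.case add_0
    by (intro exI[of _ "u @ [x]"] exI[of _ v]) (use neg_read in auto)
next
  case (neg_end Y)
  then show ?thesis
    unfolding neg_end state_inv.simps option.case add_0
    by (intro exI[of _ "[]"] exI[of _ w]) (use neg_end inv in auto)
qed

lemma cone_run_sound: "weighted_run cone_step p w k r \<Longrightarrow> r \<in> range After \<Longrightarrow> state_inv p w k"
  by (induction rule: weighted_run.induct)
     (auto simp: after_inv_def fits_after_def phi_after_def ev_Nil dest: state_inv_step)

lemma fold_\<delta>_in_Q: "v \<in> lists (X Y) \<Longrightarrow> q \<in> Q Y \<Longrightarrow> fold (\<lambda>x q. \<delta> Y q x) v q \<in> Q Y"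
  by (induction v arbitrary: q) (auto simp: \<delta>_in_Q)

lemma cone_run_positive:
  "v \<in> lists (X Y) \<Longrightarrow> q \<in> Q Y \<Longrightarrow> fold (\<lambda>x q. \<delta> Y q x) v q \<in> F Y \<Longrightarrow>
    weighted_run cone_step (Pos Y q) (map (letter_code Y True) v) 0 (After (Some Y))"
proof (induction v arbitrary: q)
  case Nil
  then show ?case using weighted_run_silent[of cone_step, OF pos_end weighted_run_Nil] by simp
next
  case (Cons x v)
  then show ?case by (auto intro: weighted_run_read pos_read \<delta>_in_Q)
qed

lemma cone_run_negative:
  "v \<in> lists (X Y) \<Longrightarrow>
    weighted_run cone_step (Neg Y (fold (\<lambda>x q. \<delta> Y q x) v (q0 Y))) (map (letter_code Y False) (rev v))
      0 (After (Some Y))"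
proof (induction v rule: rev_induct)
  case Nil
  then show ?case using weighted_run_silent[of cone_step, OF neg_end weighted_run_Nil] by simp
next
  case (snoc x v)
  then show ?case by (auto intro: weighted_run_read neg_read fold_\<delta>_in_Q q0_in_Q)
qed

lemma cone_run_syllable:
  assumes "u \<in> syllable_words Y e"
  shows "weighted_run cone_step (Before Y e) u (if e then 1 else -1) (After (Some Y))"
proof (cases e)
  case True
  then show ?thesis using assms weighted_run_silent[of cone_step, OF pos_begin cone_run_positive] q0_in_Q
    by (auto simp: syllable_words_def dfa_lang_def)
next
  case False
  then show ?thesis using assms weighted_run_silent[of cone_step, OF neg_begin cone_run_negative]
    by (auto simp: syllable_words_def dfa_lang_def)
qed

lemma cone_run_complete:
  "reduced s \<Longrightarrow> fits_after Z s \<Longrightarrow>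
    \<exists>w Z'. ev w = s \<and> weighted_run cone_step (After Z) w (phi_after Z s) (After Z')"
proof (induction s arbitrary: Z)
  case Nil
  then show ?case using ev_Nil weighted_run_Nil by (fastforce simp: phi_after_def)
next
  case (Cons x s)
  then have x: "letter_in x" "letter_nontrivial x" "reduced s" "fits_after (Some (isl x)) s"
    "Z \<noteq> Some (isl x)"
    by (auto simp: fp_reduced_Cons fits_after_def)
  obtain e u where u: "u \<in> syllable_words (isl x) e" "ev u = [x]"
    "letter_sign x = (if e then 1 else -1)"
    using syllable_word_exists[OF x(1,2)] by blast
  obtain w Z' where w: "ev w = s"
    "weighted_run cone_step (After (Some (isl x))) w (phi_after (Some (isl x)) s) (After Z')"
    using Cons.IH[OF x(3,4)] by blast
  have "ev (u @ w) = x # s"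
    using u(2) w(1) x(2,4) fp_cons_other_side[of s x] by (auto simp: ev_append fits_after_def)
  moreover have "phi_after Z (x # s) =
      junction_after Z (isl x) + (if e then 1 else -1) + phi_after (Some (isl x)) s"
    using u(3) by (simp add: phi_after_def fp_phi_Cons junction_at_def)
  moreover have "weighted_run cone_step (After Z) (u @ w)
      (junction_after Z (isl x) + ((if e then 1 else -1) + phi_after (Some (isl x)) s)) (After Z')"
    using weighted_run_silent[of cone_step, OF enter[OF x(5)]
        weighted_run_append[OF cone_run_syllable[OF u(1)] w(2)]] .
  ultimately show ?case by (metis add.assoc)
qed

lemma cone_step_alphabet: "cone_step s a d t \<Longrightarrow> set_option a \<subseteq> alphabet"
  by (induction rule: cone_step.induct) (auto intro: letter_code_in_alphabet)

lemma cone_run_lists: "weighted_run cone_step s w k t \<Longrightarrow> w \<in> lists alphabet"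
  by (erule weighted_run_lists[rotated], erule cone_step_alphabet)

lemma cone_step_weights: "cone_step s a d t \<Longrightarrow> d \<in> {-1, 0, 1}"
  by (induction rule: cone_step.induct) (rule junction_after_range, simp_all)

lemma finite_cone_step: "finite {(s, a, d, t). cone_step s a d t}"
proof -
  define QQ where "QQ = (\<Union>Y. Q Y)"
  define S where "S = range After \<union> {Before Y e | Y e. Y \<in> UNIV \<and> e \<in> UNIV} \<union>
    {Pos Y q | Y q. Y \<in> UNIV \<and> q \<in> QQ} \<union> {Neg Y q | Y q. Y \<in> UNIV \<and> q \<in> QQ}"
  have states: "s \<in> S \<and> t \<in> S" if "cone_step s a d t" for s a d t
    using that F_subset_Q unfolding S_def QQ_def
    by (induction rule: cone_step.induct) (auto intro: \<delta>_in_Q q0_in_Q)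
  have letters: "a \<in> insert None (Some ` alphabet)" if "cone_step s a d t" for s a d t
    using cone_step_alphabet[OF that] by (cases a) auto
  have "{(s, a, d, t). cone_step s a d t} \<subseteq> S \<times> insert None (Some ` alphabet) \<times> {-1, 0, 1} \<times> S"
    using states letters cone_step_weights by blast
  moreover have "finite QQ" using finite_Q by (simp add: QQ_def)
  then have "finite S" unfolding S_def by (intro finite_UnI finite_image_set2) simp_all
  ultimately show ?thesis using finite_alphabet by (auto intro: finite_subset)
qed

abbreviation cone_lang :: "nat list set" where
  "cone_lang \<equiv> positive_weight_lang cone_step (After None) (range After)"

lemma ev_cone_lang: "ev ` cone_lang = {g. reduced g \<and> fp_phi g > 0}"
proof (intro equalityI subsetI)
  fix g assume "g \<in> ev ` cone_lang"
  then obtain w k Z where "g = ev w" "weighted_run cone_step (After None) w k (After Z)" "k > 0"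
    by (auto simp: positive_weight_lang_def)
  then show "g \<in> {g. reduced g \<and> fp_phi g > 0}"
    using cone_run_sound ev_reduced by (fastforce simp: after_inv_def)
next
  fix g assume "g \<in> {g. reduced g \<and> fp_phi g > 0}"
  then obtain w Z where "ev w = g" "weighted_run cone_step (After None) w (fp_phi g) (After Z)"
    "fp_phi g > 0"
    using cone_run_complete[of g None] by (auto simp: fits_after_def)
  then show "g \<in> ev ` cone_lang" by (intro image_eqI[of _ _ w]) (auto simp: positive_weight_lang_def)
qed

lemma ev_lists_alphabet: "ev ` lists alphabet = {g. reduced g}"
proof (intro equalityI subsetI)
  fix g assume "g \<in> {g. reduced g}"
  then obtain w Z where "ev w = g" "weighted_run cone_step (After None) w (phi_after None g) (After Z)"
    using cone_run_complete[of g None] by (auto simp: fits_after_def)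
  then show "g \<in> ev ` lists alphabet"
    using cone_run_lists by blast
qed (auto simp: ev_reduced)

theorem one_counter_left_order_free_product:
  "one_counter_left_order (free_product A B) (quasi_morphism_order (free_product A B) fp_phi)"
  unfolding one_counter_left_order_def
proof (intro conjI exI)
  show "left_order (free_product A B) (quasi_morphism_order (free_product A B) fp_phi)"
    by (rule order_quasi_morphism.left_order[OF order_quasi_morphism_fp_phi])
  show "finite alphabet" by (rule finite_alphabet)
  show "gen_word ` alphabet \<subseteq> carrier (free_product A B)"
    using gen_word_reduced by (auto simp: free_product_simps)
  show "ev ` lists alphabet = carrier (free_product A B)"
    by (simp add: ev_lists_alphabet free_product_simps)
  show "cone_lang \<subseteq> lists alphabet"
    by (auto simp: positive_weight_lang_def dest!: cone_run_lists)
  show "one_counter_lang alphabet cone_lang"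
    by (rule one_counter_lang_positive_weight[OF finite_cone_step _ cone_step_weights
          cone_step_alphabet]) simp
  show "ev ` cone_lang =
      positive_cone (free_product A B) (quasi_morphism_order (free_product A B) fp_phi)"
    by (simp add: order_quasi_morphism.positive_cone[OF order_quasi_morphism_fp_phi] ev_cone_lang
        free_product_simps)
qed

end

lemma regular_left_orderE:
  assumes "regular_left_order G R"
  obtains X f Q q0 F d where "left_order G R" "finite X" "f ` X \<subseteq> carrier G"
    "finite Q" "q0 \<in> Q" "F \<subseteq> Q" "\<forall>q\<in>Q. \<forall>x\<in>X. d q x \<in> Q"
    "eval_word G f ` dfa_lang X Q q0 F d = positive_cone G R"
  using assms unfolding regular_left_order_def regular_lang_def
  by (elim exE conjE) (rule that; simp)

theorem corollary5p9:
  fixes A :: "'a monoid" and B :: "'b monoid"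
  assumes "group A" and "group B"
    and "\<exists>R. regular_left_order A R"
    and "\<exists>R. regular_left_order B R"
  shows "\<exists>R. one_counter_left_order (free_product A B) R"
proof -
  obtain RA XA fA QA qA FA dA where A: "left_order A RA" "finite XA" "fA ` XA \<subseteq> carrier A"
    "finite QA" "qA \<in> QA" "FA \<subseteq> QA" "\<forall>q\<in>QA. \<forall>x\<in>XA. dA q x \<in> QA"
    "eval_word A fA ` dfa_lang XA QA qA FA dA = positive_cone A RA"
    using assms(3) regular_left_orderE by metis
  obtain RB XB fB QB qB FB dB where B: "left_order B RB" "finite XB" "fB ` XB \<subseteq> carrier B"
    "finite QB" "qB \<in> QB" "FB \<subseteq> QB" "\<forall>q\<in>QB. \<forall>x\<in>XB. dB q x \<in> QB"
    "eval_word B fB ` dfa_lang XB QB qB FB dB = positive_cone B RB"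
    using assms(4) regular_left_orderE by metis
  interpret regular_cones A B "positive_cone A RA" "positive_cone B RB" fA fB
    "\<lambda>Y. if Y then XA else XB" "\<lambda>Y. if Y then QA else QB" "\<lambda>Y. if Y then qA else qB"
    "\<lambda>Y. if Y then FA else FB" "\<lambda>Y. if Y then dA else dB"
  proof (intro regular_cones.intro two_cones.intro two_groups.intro two_cones_axioms.intro
      regular_cones_axioms.intro)
    show "is_positive_cone A (positive_cone A RA)" "is_positive_cone B (positive_cone B RB)"
      using assms(1,2) A(1) B(1) by (simp_all add: left_order_positive_cone)
  qed (use assms(1,2) A B in \<open>auto split: if_splits\<close>)
  show ?thesis using one_counter_left_order_free_product by blast
qed

end
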